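(* Let $\lambda>0$, let $\mathbf r_\lambda=(\mathbf r_{1\lambda},\dots,\mathbf r_{N\lambda})\in\mathfrak R$ be any point at which $f+\lambda g$ attains its minimum over $\mathfrak R$, write $\mathbf r_{i\lambda}=|\mathbf r_{i\lambda}|(\cos\varphi_{i\lambda},\sin\varphi_{i\lambda})$, put $\omega=\sqrt{2\lambda}$ and let $\mathbf r_\lambda(t)=(\mathbf r_{1\lambda}(t),\dots,\mathbf r_{N\lambda}(t))$ with $\mathbf r_{i\lambda}(t)=|\mathbf r_{i\lambda}|(\cos(\varphi_{i\lambda}+\omega t),\sin(\varphi_{i\lambda}+\omega t))$, $t\ge0$. Then this trajectory is stationary and periodic, and for every $t\ge 0$ and $i=1,\dots,N$, $$\frac{\partial f}{\partial \mathbf r_i}[\mathbf r_\lambda(t)]=-\lambda\frac{\partial g}{\partial \mathbf r_i}[\mathbf r_\lambda(t)],\qquad \mathbf F_i[\mathbf r_\lambda(t)]=-2\lambda m_i\mathbf r_{i\lambda}(t).$$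
   Context: Fix $N\ge 2$, masses $m_1,\dots,m_N>0$ and $\gamma>0$. Planar configuration space $\mathfrak R=\{\mathbf r=(\mathbf r_1,\dots,\mathbf r_N)\in(\mathbb R^2)^N:\ \mathbf r_i\neq\mathbf r_j \text{ for } i\neq j\}$; $f(\mathbf r)=\sum_{i<j}\frac{\gamma m_im_j}{|\mathbf r_j-\mathbf r_i|}$, $g(\mathbf r)=\sum_i m_i|\mathbf r_i|^2$; $\mathbf F_i(\mathbf r)=\sum_{j\ne i}\frac{\gamma m_im_j(\mathbf r_j-\mathbf r_i)}{|\mathbf r_j-\mathbf r_i|^3}$. For every $\lambda>0$, $f+\lambda g$ attains its minimum on $\mathfrak R$. A curve $\mathbf r(t)$, $t\ge0$, in $\mathfrak R$ is called stationary if there are constants $0<C_1\le C_2<\infty$ with $C_1\le|\mathbf r_j(t)-\mathbf r_i(t)|\le C_2$ for all $i\ne j$ and $t\ge0$. *)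

theory Defs
  imports "HOL-Analysis.Analysis"
begin

text \<open>Bodies are indexed by 0..N-1 (i.e. i < N). A configuration is a map
  nat => real^2; only the values at indices below N matter.\<close>

definition config_space :: "nat \<Rightarrow> (nat \<Rightarrow> real^2) set" where
  "config_space N = {r. \<forall>i<N. \<forall>j<N. i \<noteq> j \<longrightarrow> r i \<noteq> r j}"

definition fpot :: "real \<Rightarrow> (nat \<Rightarrow> real) \<Rightarrow> nat \<Rightarrow> (nat \<Rightarrow> real^2) \<Rightarrow> real" where
  "fpot \<gamma> m N r = (\<Sum>j<N. \<Sum>i<j. \<gamma> * m i * m j / norm (r j - r i))"

definition gmom :: "(nat \<Rightarrow> real) \<Rightarrow> nat \<Rightarrow> (nat \<Rightarrow> real^2) \<Rightarrow> real" where
  "gmom m N r = (\<Sum>i<N. m i * (norm (r i))\<^sup>2)"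

definition force :: "real \<Rightarrow> (nat \<Rightarrow> real) \<Rightarrow> nat \<Rightarrow> (nat \<Rightarrow> real^2) \<Rightarrow> nat \<Rightarrow> real^2" where
  "force \<gamma> m N r i =
     (\<Sum>j\<in>{..<N} - {i}. (\<gamma> * m i * m j / (norm (r j - r i))^3) *\<^sub>R (r j - r i))"

definition stationary :: "nat \<Rightarrow> (real \<Rightarrow> nat \<Rightarrow> real^2) \<Rightarrow> bool" where
  "stationary N c \<longleftrightarrow> (\<forall>t\<ge>0. c t \<in> config_space N) \<and>
     (\<exists>C1 C2. 0 < C1 \<and> C1 \<le> C2 \<and>
        (\<forall>t\<ge>0. \<forall>i<N. \<forall>j<N. i \<noteq> j \<longrightarrow>
            C1 \<le> norm (c t j - c t i) \<and> norm (c t j - c t i) \<le> C2))"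

definition periodic_curve :: "nat \<Rightarrow> (real \<Rightarrow> nat \<Rightarrow> real^2) \<Rightarrow> bool" where
  "periodic_curve N c \<longleftrightarrow> (\<exists>T>0. \<forall>t\<ge>0. \<forall>i<N. c (t + T) i = c t i)"

end

theory Submission
  imports Defs
begin

text \<open>A rotation about the origin preserves all mutual distances and all distances to the
  origin, hence preserves \<open>f\<close>, \<open>g\<close> and the configuration space. So every configuration
  \<open>r\<^sub>\<lambda>(t)\<close> on the curve is again a minimiser of \<open>f + \<lambda> g\<close>, its mutual distances are
  constant (which makes it stationary), and it has period \<open>2\<pi>/\<omega>\<close>. Moving body \<open>i\<close> alone
  keeps a configuration inside the open set where the bodies are distinct, so at a minimiser
  the partial gradient of \<open>f + \<lambda> g\<close> in \<open>r\<^sub>i\<close> vanishes; as the partial gradient of \<open>f\<close> is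
  \<open>F\<^sub>i\<close> and that of \<open>g\<close> is \<open>2 m\<^sub>i r\<^sub>i\<close>, this is the claimed balance of forces.\<close>

definition plane_rotation :: "real \<Rightarrow> real^2 \<Rightarrow> real^2" where
  "plane_rotation \<theta> v = vector [cos \<theta> * v$1 - sin \<theta> * v$2, sin \<theta> * v$1 + cos \<theta> * v$2]"

lemma plane_rotation_diff: "plane_rotation \<theta> (a - b) = plane_rotation \<theta> a - plane_rotation \<theta> b"
  unfolding plane_rotation_def by (simp add: vec_eq_iff forall_2 algebra_simps)

lemma norm_plane_rotation: "norm (plane_rotation \<theta> v) = norm v"
proof -
  have "(cos \<theta> * v$1 - sin \<theta> * v$2)\<^sup>2 + (sin \<theta> * v$1 + cos \<theta> * v$2)\<^sup>2
      = ((sin \<theta>)\<^sup>2 + (cos \<theta>)\<^sup>2) * ((v$1)\<^sup>2 + (v$2)\<^sup>2)"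
    by algebra
  then show ?thesis
    by (simp add: plane_rotation_def norm_vec_def L2_set_def sum_2)
qed

lemma plane_rotation_polar:
  "plane_rotation \<theta> (c *\<^sub>R vector [cos \<phi>, sin \<phi>]) = c *\<^sub>R vector [cos (\<phi> + \<theta>), sin (\<phi> + \<theta>)]"
  unfolding plane_rotation_def by (simp add: vec_eq_iff forall_2 cos_add sin_add algebra_simps)

lemma plane_rotation_add_2pi: "plane_rotation (\<theta> + 2 * pi) = plane_rotation \<theta>"
  by (simp add: plane_rotation_def fun_eq_iff)

lemma config_space_if_dist_eq:
  assumes "r \<in> config_space N" "\<And>i j. i < N \<Longrightarrow> j < N \<Longrightarrow> norm (s j - s i) = norm (r j - r i)"
  shows "s \<in> config_space N"
  unfolding config_space_def
proof (intro CollectI allI impI)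
  fix i j assume "i < N" "j < N" "i \<noteq> j"
  then have "norm (r j - r i) \<noteq> 0" using assms(1) by (auto simp: config_space_def)
  then show "s i \<noteq> s j" using assms(2)[OF \<open>i < N\<close> \<open>j < N\<close>] by auto
qed

lemma fpot_eq_if_dist_eq:
  assumes "\<And>i j. i < N \<Longrightarrow> j < N \<Longrightarrow> norm (s j - s i) = norm (r j - r i)"
  shows "fpot \<gamma> m N s = fpot \<gamma> m N r"
  unfolding fpot_def using assms by (intro sum.cong) auto

lemma gmom_eq_if_norm_eq:
  assumes "\<And>i. i < N \<Longrightarrow> norm (s i) = norm (r i)"
  shows "gmom m N s = gmom m N r"
  unfolding gmom_def using assms by (intro sum.cong) auto

definition energy_minimiser ::
    "real \<Rightarrow> (nat \<Rightarrow> real) \<Rightarrow> nat \<Rightarrow> real \<Rightarrow> (nat \<Rightarrow> real^2) \<Rightarrow> bool" where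
  "energy_minimiser \<gamma> m N lam r \<longleftrightarrow> r \<in> config_space N \<and>
     (\<forall>s\<in>config_space N. fpot \<gamma> m N r + lam * gmom m N r \<le> fpot \<gamma> m N s + lam * gmom m N s)"

lemma energy_minimiser_if_isometric:
  assumes "energy_minimiser \<gamma> m N lam r"
    and "\<And>i j. i < N \<Longrightarrow> j < N \<Longrightarrow> norm (s j - s i) = norm (r j - r i)"
    and "\<And>i. i < N \<Longrightarrow> norm (s i) = norm (r i)"
  shows "energy_minimiser \<gamma> m N lam s"
proof -
  have "r \<in> config_space N" using assms(1) by (simp add: energy_minimiser_def)
  then have "s \<in> config_space N" using assms(2) by (rule config_space_if_dist_eq)
  moreover have "fpot \<gamma> m N s = fpot \<gamma> m N r" using assms(2) by (rule fpot_eq_if_dist_eq)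
  moreover have "gmom m N s = gmom m N r" using assms(3) by (rule gmom_eq_if_norm_eq)
  ultimately show ?thesis using assms(1) by (simp add: energy_minimiser_def)
qed

lemma stationary_if_dist_eq:
  assumes "r \<in> config_space N"
    and "\<And>t i j. t \<ge> 0 \<Longrightarrow> i < N \<Longrightarrow> j < N \<Longrightarrow> norm (c t j - c t i) = norm (r j - r i)"
  shows "stationary N c"
proof -
  define P where "P = {(i, j). i < N \<and> j < N \<and> i \<noteq> j}"
  \<comment> \<open>\<open>1\<close> keeps \<open>D\<close> nonempty when \<open>N < 2\<close>, so that \<open>Min D\<close> and \<open>Max D\<close> are meaningful\<close>
  define D where "D = insert 1 ((\<lambda>(i, j). norm (r j - r i)) ` P)"
  have "finite P" unfolding P_def by (rule finite_subset[of _ "{..<N} \<times> {..<N}"]) auto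
  then have "finite D" by (simp add: D_def)
  have "0 < Min D"
    using \<open>finite D\<close> assms(1) by (auto simp: D_def P_def config_space_def)
  moreover have "Min D \<le> Max D"
    using \<open>finite D\<close> by (intro order_trans[OF Min_le[of D 1] Max_ge[of D 1]]) (auto simp: D_def)
  moreover have "Min D \<le> norm (c t j - c t i) \<and> norm (c t j - c t i) \<le> Max D"
    if "t \<ge> 0" "i < N" "j < N" "i \<noteq> j" for t i j
  proof -
    have "norm (c t j - c t i) \<in> D"
      using that by (auto simp: assms(2) D_def P_def intro!: image_eqI[of _ _ "(i, j)"])
    then show ?thesis using \<open>finite D\<close> by simp
  qed
  moreover have "c t \<in> config_space N" if "t \<ge> 0" for t
    using config_space_if_dist_eq[OF assms(1) assms(2)[OF that]] .
  ultimately show ?thesis unfolding stationary_def by blast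
qed

lemma periodic_curve_uniform_rotation:
  assumes "\<omega> > 0" "\<And>t i. i < N \<Longrightarrow> c t i = plane_rotation (\<omega> * t) (r i)"
  shows "periodic_curve N c"
  unfolding periodic_curve_def
proof (intro exI[of _ "2 * pi / \<omega>"] conjI allI impI)
  show "0 < 2 * pi / \<omega>" using assms(1) by simp
  fix t :: real and i assume "i < N"
  have "\<omega> * (t + 2 * pi / \<omega>) = \<omega> * t + 2 * pi"
    using assms(1) by (simp add: field_simps)
  then show "c (t + 2 * pi / \<omega>) i = c t i"
    using \<open>i < N\<close> by (simp add: assms(2) plane_rotation_add_2pi)
qed

lemma sum_pairs_split_index:
  fixes T :: "nat \<Rightarrow> nat \<Rightarrow> 'a::comm_monoid_add"
  assumes "i < N"
  shows "(\<Sum>j<N. \<Sum>k<j. T k j) = (\<Sum>j<N. \<Sum>k<j. if k = i \<or> j = i then 0 else T k j)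
           + (\<Sum>l\<in>{..<N} - {i}. T (min l i) (max l i))"
  using assms
proof (induction N)
  case 0
  then show ?case by simp
next
  case (Suc n)
  show ?case
  proof (cases "i < n")
    case True
    have "(\<Sum>k<n. T k n) = (\<Sum>k<n. (if k = i then 0 else T k n) + (if k = i then T i n else 0))"
      by (rule sum.cong) auto
    also have "\<dots> = (\<Sum>k<n. if k = i \<or> n = i then 0 else T k n) + T i n"
      using True by (simp add: sum.distrib)
    finally have "(\<Sum>k<n. T k n) = (\<Sum>k<n. if k = i \<or> n = i then 0 else T k n) + T i n" .
    moreover have "{..<Suc n} - {i} = insert n ({..<n} - {i})" using True by auto
    ultimately show ?thesis using Suc.IH[OF True] True by (simp add: ac_simps)
  next
    case False
    then have "i = n" using Suc.prems by simp
    moreover have "{..<Suc n} - {n} = {..<n}" by auto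
    ultimately show ?thesis by (simp add: min_def max_def)
  qed
qed

lemma fpot_fun_upd:
  assumes "i < N"
  shows "\<exists>Z. \<forall>x. fpot \<gamma> m N (s(i := x)) = Z + (\<Sum>l\<in>{..<N} - {i}. \<gamma> * m i * m l / norm (s l - x))"
proof (intro exI allI)
  fix x
  let ?T = "\<lambda>s k j. \<gamma> * m k * m j / norm (s j - s k)"
  have "fpot \<gamma> m N (s(i := x)) = (\<Sum>j<N. \<Sum>k<j. if k = i \<or> j = i then 0 else ?T (s(i := x)) k j)
      + (\<Sum>l\<in>{..<N} - {i}. ?T (s(i := x)) (min l i) (max l i))"
    unfolding fpot_def by (rule sum_pairs_split_index[OF assms])
  also have "(\<Sum>j<N. \<Sum>k<j. if k = i \<or> j = i then 0 else ?T (s(i := x)) k j)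
      = (\<Sum>j<N. \<Sum>k<j. if k = i \<or> j = i then 0 else ?T s k j)"
    by (intro sum.cong) auto
  also have "(\<Sum>l\<in>{..<N} - {i}. ?T (s(i := x)) (min l i) (max l i))
      = (\<Sum>l\<in>{..<N} - {i}. \<gamma> * m i * m l / norm (s l - x))"
    by (intro sum.cong) (auto simp: min_def max_def norm_minus_commute mult_ac)
  finally show "fpot \<gamma> m N (s(i := x)) = (\<Sum>j<N. \<Sum>k<j. if k = i \<or> j = i then 0 else ?T s k j)
      + (\<Sum>l\<in>{..<N} - {i}. \<gamma> * m i * m l / norm (s l - x))" .
qed

lemma GDERIV_sum:
  assumes "finite A" "\<And>a. a \<in> A \<Longrightarrow> GDERIV (f a) x :> D a"
  shows "GDERIV (\<lambda>x. \<Sum>a\<in>A. f a x) x :> (\<Sum>a\<in>A. D a)"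
  using assms unfolding gderiv_def by (auto intro!: has_derivative_sum simp: inner_sum_right)

lemma GDERIV_inverse_dist:
  fixes a x :: "'a::real_inner"
  assumes "a \<noteq> x"
  shows "GDERIV (\<lambda>y. c / norm (a - y)) x :> (c / norm (a - x) ^ 3) *\<^sub>R (a - x)"
proof -
  have "((\<lambda>y. norm (a - y)) has_derivative (\<lambda>h. h \<bullet> - sgn (a - x))) (at x)"
    using has_derivative_compose[OF has_derivative_diff[OF has_derivative_const has_derivative_ident]
        has_derivative_norm[of "a - x"]] assms
    by simp
  then have "GDERIV (\<lambda>y. norm (a - y)) x :> - sgn (a - x)"
    by (simp add: gderiv_def)
  moreover have "DERIV (\<lambda>u. c / u) (norm (a - x)) :> - c / (norm (a - x))\<^sup>2"
    using assms by (auto intro!: derivative_eq_intros simp: power2_eq_square)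
  ultimately have "GDERIV (\<lambda>y. c / norm (a - y)) x :> (- c / (norm (a - x))\<^sup>2) *\<^sub>R - sgn (a - x)"
    by (rule GDERIV_DERIV_compose)
  then show ?thesis
    using assms by (simp add: sgn_div_norm power2_eq_square power3_eq_cube field_simps)
qed

lemma GDERIV_fpot_fun_upd:
  assumes "s \<in> config_space N" "i < N"
  shows "GDERIV (\<lambda>x. fpot \<gamma> m N (s(i := x))) (s i) :> force \<gamma> m N s i"
proof -
  obtain Z where Z: "\<And>x. fpot \<gamma> m N (s(i := x)) = Z + (\<Sum>l\<in>{..<N} - {i}. \<gamma> * m i * m l / norm (s l - x))"
    using fpot_fun_upd[OF assms(2)] by blast
  have "GDERIV (\<lambda>x. Z + (\<Sum>l\<in>{..<N} - {i}. \<gamma> * m i * m l / norm (s l - x))) (s i)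
      :> 0 + (\<Sum>l\<in>{..<N} - {i}. (\<gamma> * m i * m l / norm (s l - s i) ^ 3) *\<^sub>R (s l - s i))"
  proof (intro GDERIV_add GDERIV_const GDERIV_sum)
    fix l assume "l \<in> {..<N} - {i}"
    then have "s l \<noteq> s i" using assms unfolding config_space_def by auto
    then show "GDERIV (\<lambda>x. \<gamma> * m i * m l / norm (s l - x)) (s i)
        :> (\<gamma> * m i * m l / norm (s l - s i) ^ 3) *\<^sub>R (s l - s i)"
      by (rule GDERIV_inverse_dist)
  qed simp
  then show ?thesis unfolding Z force_def by simp
qed

lemma GDERIV_gmom_fun_upd:
  assumes "i < N"
  shows "GDERIV (\<lambda>x. gmom m N (s(i := x))) (s i) :> (2 * m i) *\<^sub>R s i"
proof -
  have Z: "gmom m N (s(i := x)) = (\<Sum>k\<in>{..<N} - {i}. m k * (norm (s k))\<^sup>2) + m i * (x \<bullet> x)" for x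
  proof -
    have "gmom m N (s(i := x)) = m i * (norm x)\<^sup>2 + (\<Sum>k\<in>{..<N} - {i}. m k * (norm ((s(i := x)) k))\<^sup>2)"
      unfolding gmom_def using assms by (subst sum.remove[of _ i]) auto
    also have "(\<Sum>k\<in>{..<N} - {i}. m k * (norm ((s(i := x)) k))\<^sup>2) = (\<Sum>k\<in>{..<N} - {i}. m k * (norm (s k))\<^sup>2)"
      by (intro sum.cong) auto
    finally show ?thesis unfolding power2_norm_eq_inner by (simp only: add.commute)
  qed
  have "((\<lambda>x. m i * (x \<bullet> x)) has_derivative (\<lambda>h. h \<bullet> ((2 * m i) *\<^sub>R s i))) (at (s i))"
    by (auto intro!: derivative_eq_intros simp: inner_commute algebra_simps)
  then have "GDERIV (\<lambda>x. (\<Sum>k\<in>{..<N} - {i}. m k * (norm (s k))\<^sup>2) + m i * (x \<bullet> x)) (s i)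
      :> 0 + (2 * m i) *\<^sub>R s i"
    by (intro GDERIV_add GDERIV_const) (simp add: gderiv_def)
  then show ?thesis unfolding Z by simp
qed

lemma GDERIV_local_min_eq_0:
  assumes "GDERIV f x :> D" "eventually (\<lambda>y. f x \<le> f y) (at x)"
  shows "D = 0"
proof -
  have "(\<lambda>h. h \<bullet> D) = (\<lambda>h. 0)"
    using has_derivative_local_min assms unfolding gderiv_def by blast
  then have "D \<bullet> D = 0" by metis
  then show ?thesis by simp
qed

lemma eventually_fun_upd_in_config_space:
  assumes "s \<in> config_space N" "i < N"
  shows "eventually (\<lambda>x. s(i := x) \<in> config_space N) (nhds (s i))"
  unfolding eventually_nhds
proof (intro exI conjI ballI)
  show "open (- s ` ({..<N} - {i}))" by (intro open_Compl finite_imp_closed) auto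
  show "s i \<in> - s ` ({..<N} - {i})" using assms unfolding config_space_def by auto
  show "s(i := x) \<in> config_space N" if "x \<in> - s ` ({..<N} - {i})" for x
    using assms(1) that unfolding config_space_def by (auto simp: image_iff)
qed

lemma force_eq_at_energy_minimiser:
  assumes "energy_minimiser \<gamma> m N lam s" "i < N"
  shows "force \<gamma> m N s i = - (2 * lam * m i) *\<^sub>R s i"
proof -
  have s: "s \<in> config_space N" using assms(1) by (simp add: energy_minimiser_def)
  define E where "E x = fpot \<gamma> m N (s(i := x)) + lam * gmom m N (s(i := x))" for x
  have "GDERIV E (s i) :> force \<gamma> m N s i + (lam *\<^sub>R ((2 * m i) *\<^sub>R s i) + gmom m N s *\<^sub>R 0)"
    unfolding E_def
    using GDERIV_add[OF GDERIV_fpot_fun_upd[OF s assms(2), of \<gamma> m]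
        GDERIV_mult[OF GDERIV_const[of lam] GDERIV_gmom_fun_upd[OF assms(2), of m s]]]
    by simp
  moreover have "eventually (\<lambda>x. E (s i) \<le> E x) (at (s i))"
    using eventually_fun_upd_in_config_space[OF s assms(2)] assms(1)
    unfolding E_def energy_minimiser_def eventually_at_filter
    by (auto elim!: eventually_mono)
  ultimately have "force \<gamma> m N s i + lam *\<^sub>R ((2 * m i) *\<^sub>R s i) = 0"
    using GDERIV_local_min_eq_0 by fastforce
  then show ?thesis by (simp add: eq_neg_iff_add_eq_0 mult_ac)
qed

text \<open>The hypotheses on \<open>N\<close>, \<open>m\<close> and \<open>\<gamma>\<close> are only needed for the existence of a minimiser,
  which the theorem presupposes.\<close>

theorem theorem3p2:
  fixes N :: nat and m :: "nat \<Rightarrow> real" and \<gamma> lam :: real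
    and r :: "nat \<Rightarrow> real^2" and \<phi> :: "nat \<Rightarrow> real"
  assumes "N \<ge> 2" and "\<forall>i<N. m i > 0" and "\<gamma> > 0" and "lam > 0"
    and "r \<in> config_space N"
    and "\<forall>s\<in>config_space N. fpot \<gamma> m N r + lam * gmom m N r \<le> fpot \<gamma> m N s + lam * gmom m N s"
    and "\<forall>i<N. r i = norm (r i) *\<^sub>R vector [cos (\<phi> i), sin (\<phi> i)]"
  defines "rt \<equiv> (\<lambda>t i. norm (r i) *\<^sub>R vector [cos (\<phi> i + sqrt (2 * lam) * t), sin (\<phi> i + sqrt (2 * lam) * t)])"
  shows "stationary N rt \<and> periodic_curve N rt \<and>
    (\<forall>t\<ge>0. \<forall>i<N.
       (\<exists>Df Dg. GDERIV (\<lambda>x. fpot \<gamma> m N ((rt t)(i := x))) (rt t i) :> Df \<and>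
                GDERIV (\<lambda>x. gmom m N ((rt t)(i := x))) (rt t i) :> Dg \<and>
                Df = - lam *\<^sub>R Dg) \<and>
       force \<gamma> m N (rt t) i = - (2 * lam * m i) *\<^sub>R rt t i)"
proof -
  define \<omega> where "\<omega> = sqrt (2 * lam)"
  have "\<omega> > 0" using \<open>lam > 0\<close> by (simp add: \<omega>_def)
  have rt_rotation: "rt t i = plane_rotation (\<omega> * t) (r i)" if "i < N" for t i
    using plane_rotation_polar[of "\<omega> * t" "norm (r i)" "\<phi> i"] assms(7) that
    by (simp add: rt_def \<omega>_def)
  have dist: "norm (rt t j - rt t i) = norm (r j - r i)" if "i < N" "j < N" for t i j
    using that by (simp add: rt_rotation plane_rotation_diff[symmetric] norm_plane_rotation)
  have "energy_minimiser \<gamma> m N lam r"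
    using assms(5,6) by (simp add: energy_minimiser_def)
  then have minimiser: "energy_minimiser \<gamma> m N lam (rt t)" for t
    by (rule energy_minimiser_if_isometric[OF _ dist]) (simp_all add: rt_rotation norm_plane_rotation)
  have "stationary N rt"
    using assms(5) dist by (rule stationary_if_dist_eq)
  moreover have "periodic_curve N rt"
    using \<open>\<omega> > 0\<close> rt_rotation by (rule periodic_curve_uniform_rotation)
  moreover have "GDERIV (\<lambda>x. fpot \<gamma> m N ((rt t)(i := x))) (rt t i) :> force \<gamma> m N (rt t) i"
    and "GDERIV (\<lambda>x. gmom m N ((rt t)(i := x))) (rt t i) :> (2 * m i) *\<^sub>R rt t i"
    and "force \<gamma> m N (rt t) i = - (2 * lam * m i) *\<^sub>R rt t i"
    if "i < N" for t i
  proof -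
    have "rt t \<in> config_space N" using minimiser by (simp add: energy_minimiser_def)
    then show "GDERIV (\<lambda>x. fpot \<gamma> m N ((rt t)(i := x))) (rt t i) :> force \<gamma> m N (rt t) i"
      using that by (rule GDERIV_fpot_fun_upd)
    show "GDERIV (\<lambda>x. gmom m N ((rt t)(i := x))) (rt t i) :> (2 * m i) *\<^sub>R rt t i"
      using that by (rule GDERIV_gmom_fun_upd)
    show "force \<gamma> m N (rt t) i = - (2 * lam * m i) *\<^sub>R rt t i"
      using minimiser that by (rule force_eq_at_energy_minimiser)
  qed
  ultimately show ?thesis by fastforce
qed

end
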